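(* Let $\mathcal{G}$ be a graph with persuadable nodes $1,\ldots,n$ and zealots $n+1,\ldots,n+m$ (with fixed zealot opinions), with at least one zealot ($m\ge 1$), and suppose the persuadable subgraph $\mathcal{G}_{\mathcal{P}}$ (the subgraph induced by the persuadable nodes) is connected. Fix $\delta\ge 0$. Let $\bar{\mathbf{x}}\in\mathbb{R}^n$ be the unique steady state (vector of persuadable opinions) of the SBCM with $\gamma=0$ on $\mathcal{G}$. Then there exist $\epsilon>0$ and a unique $C^1$ function $\mathbf{h}:[0,\epsilon)\to\mathbb{R}^n$ such that: (1) $\mathbf{h}(0)=\bar{\mathbf{x}}$; (2) for all $\gamma\in[0,\epsilon)$, the SBCM with parameter $\gamma$ has a unique steady state $\mathbf{x}_\gamma\in\mathbb{R}^n$, and $\mathbf{h}(\gamma)=\mathbf{x}_\gamma$; (3) for all $\gamma\in[0,\epsilon)$, the steady state $\mathbf{x}_\gamma$ is linearly stable.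
   Context: Let $\mathcal{G}$ be a finite undirected unweighted graph without self-loops, with node set $\mathcal{N}$; write $i\sim j$ if nodes $i,j$ are adjacent. The nodes are partitioned into zealots $\mathcal{Z}$ and persuadable nodes $\mathcal{P}=\mathcal{N}\setminus\mathcal{Z}$. For $\gamma,\delta\ge 0$, the influence function is $w(x_i,x_j)=\frac{1}{1+e^{\gamma(x_i-x_j)^2-\gamma\delta}}$ if $i\sim j$ and $0$ otherwise. The SBCM is $\frac{dx_i}{dt}=f_i(\mathbf{x})=\frac{\sum_j w(x_i,x_j)(x_j-x_i)}{\sum_j w(x_i,x_j)}$ for $i\in\mathcal{P}$ and $\frac{dx_i}{dt}=0$ for $i\in\mathcal{Z}$, so zealot opinions stay fixed; a steady state is a vector of persuadable opinions making all $f_i$, $i\in\mathcal{P}$, vanish (zealot opinions held at their fixed values). A steady state is linearly stable if all eigenvalues of $\mathbf{J}_{\mathcal{P}}$, the matrix of partial derivatives $\partial f_i/\partial x_j$ with $i,j\in\mathcal{P}$ evaluated at the steady state, are strictly negative. *)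

theory Defs
  imports "HOL-Analysis.Analysis"
begin

text \<open>Nodes of the graph: persuadable nodes are the elements of the finite type 'n
 (so x :: real^'n is a vector in R^n), zealots are the elements of the finite type 'm
 (m = CARD('m) >= 1 automatically, since HOL types are nonempty).  A node is
 Inl i (persuadable) or Inr k (zealot).\<close>

definition simple_graph :: "('a \<Rightarrow> 'a \<Rightarrow> bool) \<Rightarrow> bool" where
  "simple_graph E \<longleftrightarrow> (\<forall>a b. E a b \<longrightarrow> E b a) \<and> (\<forall>a. \<not> E a a)"

definition persuadable_connected :: "('n + 'm \<Rightarrow> 'n + 'm \<Rightarrow> bool) \<Rightarrow> bool" where
  "persuadable_connected E \<longleftrightarrow>
     (\<forall>i j. (\<lambda>a b. E (Inl a) (Inl b))\<^sup>*\<^sup>* i j)"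

definition opinion :: "real^'n \<Rightarrow> ('m \<Rightarrow> real) \<Rightarrow> 'n + 'm \<Rightarrow> real" where
  "opinion x z v = (case v of Inl i \<Rightarrow> x $ i | Inr k \<Rightarrow> z k)"

definition influence :: "real \<Rightarrow> real \<Rightarrow> real \<Rightarrow> real \<Rightarrow> real" where
  "influence \<gamma> \<delta> a b = 1 / (1 + exp (\<gamma> * (a - b)\<^sup>2 - \<gamma> * \<delta>))"

definition wgt :: "('n + 'm \<Rightarrow> 'n + 'm \<Rightarrow> bool) \<Rightarrow> real \<Rightarrow> real \<Rightarrow>
    real^'n \<Rightarrow> ('m \<Rightarrow> real) \<Rightarrow> 'n + 'm \<Rightarrow> 'n + 'm \<Rightarrow> real" where
  "wgt E \<gamma> \<delta> x z u v =
     (if E u v then influence \<gamma> \<delta> (opinion x z u) (opinion x z v) else 0)"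

definition sbcm_f :: "('n::finite + 'm::finite \<Rightarrow> 'n + 'm \<Rightarrow> bool) \<Rightarrow> real \<Rightarrow> real \<Rightarrow>
    ('m \<Rightarrow> real) \<Rightarrow> real^'n \<Rightarrow> 'n \<Rightarrow> real" where
  "sbcm_f E \<gamma> \<delta> z x i =
     (\<Sum>v\<in>UNIV. wgt E \<gamma> \<delta> x z (Inl i) v * (opinion x z v - opinion x z (Inl i)))
     / (\<Sum>v\<in>UNIV. wgt E \<gamma> \<delta> x z (Inl i) v)"

definition steady_state :: "('n::finite + 'm::finite \<Rightarrow> 'n + 'm \<Rightarrow> bool) \<Rightarrow> real \<Rightarrow> real \<Rightarrow>
    ('m \<Rightarrow> real) \<Rightarrow> real^'n \<Rightarrow> bool" where
  "steady_state E \<gamma> \<delta> z x \<longleftrightarrow> (\<forall>i. sbcm_f E \<gamma> \<delta> z x i = 0)"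

definition jacobian_P :: "('n::finite + 'm::finite \<Rightarrow> 'n + 'm \<Rightarrow> bool) \<Rightarrow> real \<Rightarrow> real \<Rightarrow>
    ('m \<Rightarrow> real) \<Rightarrow> real^'n \<Rightarrow> real^'n^'n" where
  "jacobian_P E \<gamma> \<delta> z x =
     (\<chi> i j. deriv (\<lambda>t. sbcm_f E \<gamma> \<delta> z (\<chi> k. if k = j then t else x $ k) i) (x $ j))"

definition is_eigenvalue :: "real^'n^'n \<Rightarrow> complex \<Rightarrow> bool" where
  "is_eigenvalue A mu \<longleftrightarrow>
     (\<exists>v :: complex^'n. v \<noteq> 0 \<and> (\<chi> i j. complex_of_real (A $ i $ j)) *v v = mu *s v)"

definition linearly_stable :: "('n::finite + 'm::finite \<Rightarrow> 'n + 'm \<Rightarrow> bool) \<Rightarrow> real \<Rightarrow> real \<Rightarrow>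
    ('m \<Rightarrow> real) \<Rightarrow> real^'n \<Rightarrow> bool" where
  "linearly_stable E \<gamma> \<delta> z x \<longleftrightarrow>
     (\<forall>mu. is_eigenvalue (jacobian_P E \<gamma> \<delta> z x) mu \<longrightarrow> mu \<in> \<real> \<and> Re mu < 0)"

definition C1_on_Ico :: "real \<Rightarrow> (real \<Rightarrow> real^'n) \<Rightarrow> bool" where
  "C1_on_Ico \<epsilon> h \<longleftrightarrow>
     (\<exists>h'. (\<forall>t\<in>{0..<\<epsilon>}. (h has_vector_derivative h' t) (at t within {0..<\<epsilon>}))
          \<and> continuous_on {0..<\<epsilon>} h')"

end

(*
  The SBCM right-hand side is f_i = N_i / W_i, where W_i > 0 is the total influence on node i
  and N_i is the sum over the neighbours v of phi(x_v - x_i), with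
  phi(s) = s / (1 + exp (gamma (s^2 - delta))).  A maximum principle confines every steady state
  to the box spanned by the zealot opinions; on that box, for gamma (zmax - zmin)^2 <= 1/2, all
  secant slopes of phi are at least 1/(1 + e)^2.  Hence N(x) - N(y) is a weighted graph
  Laplacian of x - y, grounded at the zealots, with symmetric weights bounded below, and
  connectivity together with an edge to a zealot makes such Laplacians uniformly coercive.
  Coercivity yields uniqueness of the steady state (existence is Brouwer's theorem for the
  neighbour-average map), its continuity in gamma, and its differentiability, the derivative
  solving the linearised equation.  The Jacobian at a steady state is diag(W)^-1 times a
  symmetric negative definite Laplacian, so its eigenvalues are real and negative.  An edge to
  a zealot exists because otherwise shifting all opinions by a constant would preserve steady
  states at gamma = 0.
*)
theory Submission
  imports Defs
begin

lemma sum_UNIV_Plus: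
  "(\<Sum>v\<in>UNIV. f v) = (\<Sum>j\<in>UNIV. f (Inl j)) + (\<Sum>k\<in>UNIV. f (Inr k))"
  for f :: "'a::finite + 'b::finite \<Rightarrow> 'c::comm_monoid_add"
  by (subst UNIV_Plus_UNIV [symmetric], subst sum.Plus) (auto simp: o_def)

lemma sum_sum_symmetric_weights:
  fixes a :: "'i \<Rightarrow> 'i \<Rightarrow> real"
  assumes "finite A" and "\<And>i j. a i j = a j i"
  shows "(\<Sum>i\<in>A. \<Sum>j\<in>A. a i j * u i * (d j - d i))
       = - (1/2) * (\<Sum>i\<in>A. \<Sum>j\<in>A. a i j * (u i - u j) * (d i - d j))"
proof -
  let ?S = "\<Sum>i\<in>A. \<Sum>j\<in>A. a i j * u i * (d j - d i)"
  have "?S = (\<Sum>i\<in>A. \<Sum>j\<in>A. a i j * u j * (d i - d j))"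
    by (subst sum.swap) (simp add: assms(2))
  then have "2 * ?S = (\<Sum>i\<in>A. \<Sum>j\<in>A. a i j * u i * (d j - d i) + a i j * u j * (d i - d j))"
    by (simp add: sum.distrib)
  also have "\<dots> = - (\<Sum>i\<in>A. \<Sum>j\<in>A. a i j * (u i - u j) * (d i - d j))"
    by (simp add: sum_negf[symmetric] algebra_simps)
  finally show ?thesis
    by simp
qed

lemma continuous_on_if_const [continuous_intros]:
  "continuous_on S f \<Longrightarrow> continuous_on S (\<lambda>x. if P then f x else 0)"
  by (cases P) auto

lemma tendsto_if_const:
  "(P \<Longrightarrow> (f \<longlongrightarrow> l) F) \<Longrightarrow> ((\<lambda>x. if P then f x else 0) \<longlongrightarrow> (if P then l else 0)) F"
  by (cases P) auto

lemma DERIV_if_const: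
  "(P \<Longrightarrow> (f has_real_derivative D) F)
   \<Longrightarrow> ((\<lambda>x. if P then f x else 0) has_real_derivative (if P then D else 0)) F"
  by (cases P) auto

lemma eventually_mem_at_within: "\<forall>\<^sub>F y in at x within S. y \<in> S"
  by (simp add: eventually_at_filter)

lemma has_vector_derivative_if_quotient_tendsto:
  fixes f :: "real \<Rightarrow> 'a::real_normed_vector"
  assumes "((\<lambda>y. (1 / (y - x)) *\<^sub>R (f y - f x) - D) \<longlongrightarrow> 0) (at x within S)"
  shows "(f has_vector_derivative D) (at x within S)"
  unfolding has_vector_derivative_def has_derivative_within
proof (intro conjI bounded_linear_scaleR_left)
  have "\<forall>\<^sub>F y in at x within S. norm ((1 / norm (y - x)) *\<^sub>R (f y - (f x + (y - x) *\<^sub>R D)))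
          \<le> norm ((1 / (y - x)) *\<^sub>R (f y - f x) - D)"
  proof (rule eventually_mono[OF eventually_neq_at_within])
    fix y assume "y \<noteq> x"
    then have "(1 / (y - x)) *\<^sub>R (f y - f x) - D = (1 / (y - x)) *\<^sub>R (f y - (f x + (y - x) *\<^sub>R D))"
      by (simp add: scaleR_diff_right scaleR_add_right)
    then show "norm ((1 / norm (y - x)) *\<^sub>R (f y - (f x + (y - x) *\<^sub>R D)))
          \<le> norm ((1 / (y - x)) *\<^sub>R (f y - f x) - D)"
      by simp
  qed
  then show "((\<lambda>y. (1 / norm (y - x)) *\<^sub>R (f y - (f x + (y - x) *\<^sub>R D))) \<longlongrightarrow> 0) (at x within S)"
    by (rule Lim_null_comparison) (rule tendsto_norm_zero[OF assms])
qed

lemma DERIV_divide_at_root: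
  assumes "(f has_real_derivative D) (at a)" and "isCont g a"
    and "f a = 0" and "g a \<noteq> 0"
  shows "((\<lambda>t. f t / g t) has_real_derivative D / g a) (at a)"
proof -
  have "((\<lambda>t. ((f t - f a) / (t - a)) / g t) \<longlongrightarrow> D / g a) (at a)"
    using assms(1,2,4) by (intro tendsto_divide) (auto simp: has_field_derivative_iff isCont_def)
  then show ?thesis
    using assms(3) by (simp add: has_field_derivative_iff mult.commute)
qed

lemma complex_eigenvector_Re_Im:
  fixes A :: "real^'n^'n" and v :: "complex^'n"
  assumes "(\<chi> i j. complex_of_real (A $ i $ j)) *v v = \<mu> *s v"
  shows "A *v (\<chi> j. Re (v $ j)) = Re \<mu> *\<^sub>R (\<chi> j. Re (v $ j)) - Im \<mu> *\<^sub>R (\<chi> j. Im (v $ j))"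
    and "A *v (\<chi> j. Im (v $ j)) = Im \<mu> *\<^sub>R (\<chi> j. Re (v $ j)) + Re \<mu> *\<^sub>R (\<chi> j. Im (v $ j))"
proof -
  have component: "(\<Sum>j\<in>UNIV. complex_of_real (A $ i $ j) * v $ j) = \<mu> * v $ i" for i
    using arg_cong[OF assms, of "\<lambda>u. u $ i"] by (simp add: matrix_vector_mult_def)
  show "A *v (\<chi> j. Re (v $ j)) = Re \<mu> *\<^sub>R (\<chi> j. Re (v $ j)) - Im \<mu> *\<^sub>R (\<chi> j. Im (v $ j))"
    using arg_cong[OF component, of Re] by (simp add: vec_eq_iff matrix_vector_mult_def)
  show "A *v (\<chi> j. Im (v $ j)) = Im \<mu> *\<^sub>R (\<chi> j. Re (v $ j)) + Re \<mu> *\<^sub>R (\<chi> j. Im (v $ j))"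
    using arg_cong[OF component, of Im] by (simp add: vec_eq_iff matrix_vector_mult_def)
qed

text \<open>Pair the real and imaginary parts \<open>a\<close>, \<open>b\<close> of an eigenvector with \<open>L a\<close>, \<open>L b\<close>:
  symmetry of \<open>L\<close> forces \<open>Im \<mu> = 0\<close> and definiteness \<open>Re \<mu> < 0\<close>.\<close>
lemma eigenvalue_diag_inverse_mult_neg_definite:
  fixes L :: "real^'n^'n" and w :: "'n \<Rightarrow> real"
  assumes w_pos: "\<And>i. 0 < w i" and sym: "transpose L = L"
    and neg_def: "\<And>d. d \<noteq> 0 \<Longrightarrow> d \<bullet> (L *v d) < 0"
    and "is_eigenvalue (\<chi> i j. L $ i $ j / w i) \<mu>"
  shows "\<mu> \<in> \<real> \<and> Re \<mu> < 0"
proof -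
  obtain v :: "complex^'n" where "v \<noteq> 0"
    and eigen: "(\<chi> i j. complex_of_real ((\<chi> i j. L $ i $ j / w i) $ i $ j)) *v v = \<mu> *s v"
    using assms(4) unfolding is_eigenvalue_def by blast
  define a where "a = (\<chi> j. Re (v $ j))"
  define b where "b = (\<chi> j. Im (v $ j))"
  define p where "p = Re \<mu>"
  define q where "q = Im \<mu>"
  have scaled: "(L *v u) $ i = w i * ((\<chi> i j. L $ i $ j / w i) *v u) $ i" for u i
    using w_pos[of i] by (simp add: matrix_vector_mult_def sum_divide_distrib[symmetric])
  have La: "(L *v a) $ i = w i * (p * a $ i - q * b $ i)"
    and Lb: "(L *v b) $ i = w i * (q * a $ i + p * b $ i)" for i
    unfolding scaled complex_eigenvector_Re_Im[OF eigen, folded a_def b_def] p_def q_def by simp_all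
  define P where "P = (\<Sum>i\<in>UNIV. w i * ((a $ i)\<^sup>2 + (b $ i)\<^sup>2))"
  obtain i0 where "v $ i0 \<noteq> 0"
    using \<open>v \<noteq> 0\<close> by (metis vec_eq_iff zero_index)
  then have "a $ i0 \<noteq> 0 \<or> b $ i0 \<noteq> 0"
    by (simp add: a_def b_def complex_eq_iff)
  then have "a \<noteq> 0 \<or> b \<noteq> 0" and "0 < P"
    unfolding P_def using w_pos[THEN less_imp_le]
    by (auto intro!: sum_pos2[of UNIV i0] mult_nonneg_nonneg simp: sum_power2_gt_zero_iff w_pos)
  have "b \<bullet> (L *v a) = a \<bullet> (L *v b)"
    by (metis dot_lmul_matrix inner_commute sym vector_transpose_matrix)
  moreover have "b \<bullet> (L *v a) - a \<bullet> (L *v b) = - q * P"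
    unfolding inner_vec_def La Lb P_def
    by (simp add: sum_subtractf[symmetric] sum_distrib_left power2_eq_square algebra_simps)
  ultimately have "q = 0"
    using \<open>0 < P\<close> by simp
  have "d \<bullet> (L *v d) \<le> 0" for d
    using neg_def[of d] by (cases "d = 0") auto
  then have "a \<bullet> (L *v a) + b \<bullet> (L *v b) < 0"
    using neg_def \<open>a \<noteq> 0 \<or> b \<noteq> 0\<close> by (meson add_neg_nonpos add_nonpos_neg)
  moreover have "a \<bullet> (L *v a) + b \<bullet> (L *v b) = p * P"
    unfolding inner_vec_def La Lb P_def
    by (simp add: sum.distrib[symmetric] sum_distrib_left power2_eq_square algebra_simps)
  ultimately have "p < 0"
    using \<open>0 < P\<close> by (simp add: mult_less_0_iff)
  then show ?thesis
    using \<open>q = 0\<close> unfolding p_def q_def by (simp add: complex_is_Real_iff)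
qed

section \<open>The flux along an edge\<close>

definition flux :: "real \<Rightarrow> real \<Rightarrow> real \<Rightarrow> real" where
  "flux \<gamma> \<delta> s = s / (1 + exp (\<gamma> * s\<^sup>2 - \<gamma> * \<delta>))"

definition flux_ds :: "real \<Rightarrow> real \<Rightarrow> real \<Rightarrow> real" where
  "flux_ds \<gamma> \<delta> s =
     (1 + exp (\<gamma> * s\<^sup>2 - \<gamma> * \<delta>) - 2 * \<gamma> * s\<^sup>2 * exp (\<gamma> * s\<^sup>2 - \<gamma> * \<delta>))
     / (1 + exp (\<gamma> * s\<^sup>2 - \<gamma> * \<delta>))\<^sup>2"

definition flux_dgamma :: "real \<Rightarrow> real \<Rightarrow> real \<Rightarrow> real" where
  "flux_dgamma \<gamma> \<delta> s =
     - s * (s\<^sup>2 - \<delta>) * exp (\<gamma> * s\<^sup>2 - \<gamma> * \<delta>) / (1 + exp (\<gamma> * s\<^sup>2 - \<gamma> * \<delta>))\<^sup>2"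

lemma one_plus_exp_pos: "0 < 1 + exp (a::real)"
  by (simp add: add_pos_pos)

lemma one_plus_exp_neq_0 [simp]: "1 + exp (a::real) \<noteq> 0"
  using one_plus_exp_pos[of a] by linarith

lemma flux_has_real_derivative:
  "(flux \<gamma> \<delta> has_real_derivative flux_ds \<gamma> \<delta> s) (at s within S)"
  unfolding flux_def flux_ds_def
  by (auto intro!: derivative_eq_intros simp: power2_eq_square field_simps)

lemma flux_has_real_derivative_gamma:
  "((\<lambda>\<gamma>. flux \<gamma> \<delta> s) has_real_derivative flux_dgamma \<gamma> \<delta> s) (at \<gamma> within S)"
  unfolding flux_def flux_dgamma_def
  by (auto intro!: derivative_eq_intros simp: power2_eq_square field_simps)

lemma flux_has_real_derivative_affine:
  "((\<lambda>t. flux \<gamma> \<delta> (a + t * b)) has_real_derivative flux_ds \<gamma> \<delta> a * b) (at 0)"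
proof -
  have "((\<lambda>t. a + t * b) has_real_derivative b) (at 0)"
    by (auto intro!: derivative_eq_intros)
  from DERIV_chain2[OF flux_has_real_derivative this] show ?thesis
    by simp
qed

lemma tendsto_flux_ds:
  "(g \<longlongrightarrow> \<gamma>) F \<Longrightarrow> (s \<longlongrightarrow> a) F \<Longrightarrow> ((\<lambda>t. flux_ds (g t) \<delta> (s t)) \<longlongrightarrow> flux_ds \<gamma> \<delta> a) F"
  unfolding flux_ds_def
  by (intro tendsto_intros) simp_all

lemma tendsto_flux_dgamma:
  "(g \<longlongrightarrow> \<gamma>) F \<Longrightarrow> (s \<longlongrightarrow> a) F \<Longrightarrow> ((\<lambda>t. flux_dgamma (g t) \<delta> (s t)) \<longlongrightarrow> flux_dgamma \<gamma> \<delta> a) F"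
  unfolding flux_dgamma_def
  by (intro tendsto_intros) simp_all

lemma flux_minus: "flux \<gamma> \<delta> (- s) = - flux \<gamma> \<delta> s"
  by (simp add: flux_def)

lemma flux_ds_minus: "flux_ds \<gamma> \<delta> (- s) = flux_ds \<gamma> \<delta> s"
  by (simp add: flux_ds_def)

lemma flux_eq_0_iff: "flux \<gamma> \<delta> s = 0 \<longleftrightarrow> s = 0"
  by (simp add: flux_def)

lemma flux_nonpos_iff: "flux \<gamma> \<delta> s \<le> 0 \<longleftrightarrow> s \<le> 0"
  using one_plus_exp_pos[of "\<gamma> * s\<^sup>2 - \<gamma> * \<delta>"] by (auto simp: flux_def divide_le_0_iff)

definition min_slope :: real where
  "min_slope = 1 / (1 + exp 1)\<^sup>2"

lemma min_slope_pos: "0 < min_slope"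
  unfolding min_slope_def by simp

lemma min_slope_le_flux_ds:
  assumes "0 \<le> \<gamma>" "0 \<le> \<delta>" "\<gamma> * s\<^sup>2 \<le> 1/2"
  shows "min_slope \<le> flux_ds \<gamma> \<delta> s"
proof -
  define e where "e = exp (\<gamma> * s\<^sup>2 - \<gamma> * \<delta>)"
  have "0 < e" by (simp add: e_def)
  have "\<gamma> * s\<^sup>2 - \<gamma> * \<delta> \<le> 1"
    using assms mult_nonneg_nonneg[of \<gamma> \<delta>] by linarith
  then have "e \<le> exp 1"
    unfolding e_def using assms by simp
  have numerator: "1 \<le> 1 + e - 2 * \<gamma> * s\<^sup>2 * e"
    using mult_right_mono[of "2 * \<gamma> * s\<^sup>2" 1 e] assms \<open>0 < e\<close> by simp
  have "min_slope \<le> 1 / (1 + e)\<^sup>2"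
    unfolding min_slope_def using \<open>0 < e\<close> \<open>e \<le> exp 1\<close>
    by (intro divide_left_mono power_mono mult_pos_pos) auto
  also have "\<dots> \<le> flux_ds \<gamma> \<delta> s"
    unfolding flux_ds_def e_def[symmetric] using numerator \<open>0 < e\<close>
    by (intro divide_right_mono) auto
  finally show ?thesis .
qed

definition flux_secant :: "real \<Rightarrow> real \<Rightarrow> real \<Rightarrow> real \<Rightarrow> real" where
  "flux_secant \<gamma> \<delta> a b =
     (if a = b then flux_ds \<gamma> \<delta> a else (flux \<gamma> \<delta> a - flux \<gamma> \<delta> b) / (a - b))"

lemma flux_diff_eq_secant: "flux \<gamma> \<delta> a - flux \<gamma> \<delta> b = flux_secant \<gamma> \<delta> a b * (a - b)"
  by (simp add: flux_secant_def)

lemma flux_secant_minus: "flux_secant \<gamma> \<delta> (- a) (- b) = flux_secant \<gamma> \<delta> a b"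
  by (simp add: flux_secant_def flux_minus flux_ds_minus) (simp add: field_simps)

lemma flux_secant_commute: "flux_secant \<gamma> \<delta> a b = flux_secant \<gamma> \<delta> b a"
  unfolding flux_secant_def by (metis minus_diff_eq minus_divide_divide)

lemma flux_secant_mean_value:
  "\<exists>\<xi>. min a b \<le> \<xi> \<and> \<xi> \<le> max a b \<and> flux_secant \<gamma> \<delta> a b = flux_ds \<gamma> \<delta> \<xi>"
proof (induction a b rule: linorder_wlog)
  case (le a b)
  show ?case
  proof (cases "a = b")
    case False
    with le obtain \<xi> where "a < \<xi>" "\<xi> < b"
      and "flux \<gamma> \<delta> b - flux \<gamma> \<delta> a = (b - a) * flux_ds \<gamma> \<delta> \<xi>"
      using MVT2[of a b "flux \<gamma> \<delta>" "flux_ds \<gamma> \<delta>"] flux_has_real_derivative by auto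
    with le False show ?thesis
      by (intro exI[of _ \<xi>]) (auto simp: flux_secant_def divide_eq_eq algebra_simps)
  qed (auto simp: flux_secant_def)
next
  case (sym a b)
  then show ?case
    by (simp add: flux_secant_commute min.commute max.commute)
qed

lemma min_slope_le_flux_secant:
  assumes "0 \<le> \<gamma>" "0 \<le> \<delta>" "\<gamma> * R\<^sup>2 \<le> 1/2" "\<bar>a\<bar> \<le> R" "\<bar>b\<bar> \<le> R"
  shows "min_slope \<le> flux_secant \<gamma> \<delta> a b"
proof -
  obtain \<xi> where \<xi>: "min a b \<le> \<xi>" "\<xi> \<le> max a b" "flux_secant \<gamma> \<delta> a b = flux_ds \<gamma> \<delta> \<xi>"
    using flux_secant_mean_value by blast
  have "\<bar>\<xi>\<bar> \<le> R"
    using \<xi> assms by linarith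
  then have "\<xi>\<^sup>2 \<le> R\<^sup>2"
    using power_mono[of "\<bar>\<xi>\<bar>" R 2] by simp
  then have "\<gamma> * \<xi>\<^sup>2 \<le> \<gamma> * R\<^sup>2"
    using assms(1) by (rule mult_left_mono)
  then show ?thesis
    using \<xi>(3) assms min_slope_le_flux_ds[of \<gamma> \<delta> \<xi>] by simp
qed

lemma tendsto_flux_secant:
  assumes g: "(g \<longlongrightarrow> \<gamma>) F" and u: "(u \<longlongrightarrow> b) F"
  shows "((\<lambda>t. flux_secant (g t) \<delta> (u t) b) \<longlongrightarrow> flux_ds \<gamma> \<delta> b) F"
proof -
  have "\<forall>t. \<exists>\<xi>. min (u t) b \<le> \<xi> \<and> \<xi> \<le> max (u t) b
      \<and> flux_secant (g t) \<delta> (u t) b = flux_ds (g t) \<delta> \<xi>"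
    using flux_secant_mean_value by blast
  then obtain \<xi> where \<xi>: "\<And>t. min (u t) b \<le> \<xi> t \<and> \<xi> t \<le> max (u t) b
      \<and> flux_secant (g t) \<delta> (u t) b = flux_ds (g t) \<delta> (\<xi> t)"
    by metis
  have "norm (\<xi> t - b) \<le> \<bar>u t - b\<bar>" for t
    using \<xi>[of t] by (cases "u t \<le> b") (auto simp: min_def max_def)
  then have "\<forall>t. norm (\<xi> t - b) \<le> \<bar>u t - b\<bar>" ..
  moreover have "((\<lambda>t. \<bar>u t - b\<bar>) \<longlongrightarrow> 0) F"
    using u by (simp add: tendsto_rabs_zero LIM_zero)
  ultimately have "((\<lambda>t. \<xi> t - b) \<longlongrightarrow> 0) F"
    by (rule Lim_null_comparison[OF always_eventually])
  then have "((\<lambda>t. flux_ds (g t) \<delta> (\<xi> t)) \<longlongrightarrow> flux_ds \<gamma> \<delta> b) F"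
    by (intro tendsto_flux_ds g) (simp add: LIM_zero_iff)
  then show ?thesis
    using \<xi> by simp
qed

lemma influence_pos: "0 < influence \<gamma> \<delta> a b"
  unfolding influence_def using one_plus_exp_pos by simp

lemma influence_mult_diff: "influence \<gamma> \<delta> a b * (b - a) = flux \<gamma> \<delta> (b - a)"
  unfolding influence_def flux_def by (simp add: power2_commute)

section \<open>Weighted Dirichlet Laplacians on the persuadable subgraph\<close>

locale sbcm_graph =
  fixes E :: "'n::finite + 'm::finite \<Rightarrow> 'n + 'm \<Rightarrow> bool"
    and z :: "'m \<Rightarrow> real"
    and \<delta> :: real
  assumes simple: "simple_graph E"
    and connected: "persuadable_connected E"
    and \<delta>_nonneg: "0 \<le> \<delta>"
    and zealot_edge: "\<exists>i k. E (Inl i) (Inr k)"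
begin

lemma edge_sym: "E a b \<Longrightarrow> E b a"
  using simple unfolding simple_graph_def by blast

lemma connected_induct:
  assumes "P i" and "\<And>i j. P i \<Longrightarrow> E (Inl i) (Inl j) \<Longrightarrow> P j"
  shows "P j"
proof -
  have "(\<lambda>a b. E (Inl a) (Inl b))\<^sup>*\<^sup>* i j"
    using connected unfolding persuadable_connected_def by blast
  then show ?thesis
    by induction (use assms in auto)
qed

lemma persuadable_has_neighbour: "\<exists>v. E (Inl i) v"
proof -
  obtain i' k where "E (Inl i') (Inr k)"
    using zealot_edge by blast
  moreover have "(\<lambda>a b. E (Inl a) (Inl b))\<^sup>*\<^sup>* i i'"
    using connected unfolding persuadable_connected_def by blast
  ultimately show ?thesis
    by (metis converse_rtranclpE)
qed

definition extend_by_zero :: "real^'n \<Rightarrow> 'n + 'm \<Rightarrow> real" where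
  "extend_by_zero d v = (case v of Inl j \<Rightarrow> d $ j | Inr k \<Rightarrow> 0)"

definition laplacian :: "('n \<Rightarrow> 'n + 'm \<Rightarrow> real) \<Rightarrow> real^'n \<Rightarrow> real^'n" where
  "laplacian c d =
     (\<chi> i. \<Sum>v\<in>UNIV. if E (Inl i) v then c i v * (extend_by_zero d v - d $ i) else 0)"

definition admissible :: "real \<Rightarrow> ('n \<Rightarrow> 'n + 'm \<Rightarrow> real) \<Rightarrow> bool" where
  "admissible \<kappa> c \<longleftrightarrow>
     (\<forall>i j. E (Inl i) (Inl j) \<longrightarrow> c i (Inl j) = c j (Inl i)) \<and> (\<forall>i v. E (Inl i) v \<longrightarrow> \<kappa> \<le> c i v)"

definition edge_weight :: "('n \<Rightarrow> 'n + 'm \<Rightarrow> real) \<Rightarrow> 'n \<Rightarrow> 'n \<Rightarrow> real" where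
  "edge_weight c i j = (if E (Inl i) (Inl j) then c i (Inl j) else 0)"

definition zealot_weight :: "('n \<Rightarrow> 'n + 'm \<Rightarrow> real) \<Rightarrow> 'n \<Rightarrow> real" where
  "zealot_weight c i = (\<Sum>k\<in>UNIV. if E (Inl i) (Inr k) then c i (Inr k) else 0)"

definition dirichlet_energy :: "real^'n \<Rightarrow> real" where
  "dirichlet_energy d =
     (\<Sum>i\<in>UNIV. \<Sum>j\<in>UNIV. if E (Inl i) (Inl j) then (d $ i - d $ j)\<^sup>2 else 0) / 2
     + (\<Sum>i\<in>UNIV. \<Sum>k\<in>UNIV. if E (Inl i) (Inr k) then (d $ i)\<^sup>2 else 0)"

lemma laplacian_component:
  "laplacian c d $ i = (\<Sum>j\<in>UNIV. edge_weight c i j * (d $ j - d $ i)) - zealot_weight c i * d $ i"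
proof -
  have "(\<Sum>k\<in>UNIV. if E (Inl i) (Inr k) then c i (Inr k) * (0 - d $ i) else 0)
      = - (zealot_weight c i * d $ i)"
    unfolding zealot_weight_def sum_distrib_right sum_negf[symmetric] by (rule sum.cong) auto
  moreover have "(\<Sum>j\<in>UNIV. if E (Inl i) (Inl j) then c i (Inl j) * (d $ j - d $ i) else 0)
      = (\<Sum>j\<in>UNIV. edge_weight c i j * (d $ j - d $ i))"
    unfolding edge_weight_def by (rule sum.cong) auto
  ultimately show ?thesis
    unfolding laplacian_def sum_UNIV_Plus extend_by_zero_def by (simp only: vec_lambda_beta sum.case)
qed

lemma inner_laplacian:
  assumes "admissible \<kappa> c"
  shows "u \<bullet> laplacian c d
       = - (1/2) * (\<Sum>i\<in>UNIV. \<Sum>j\<in>UNIV. edge_weight c i j * (u $ i - u $ j) * (d $ i - d $ j))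
         - (\<Sum>i\<in>UNIV. zealot_weight c i * u $ i * d $ i)"
proof -
  have sym: "edge_weight c i j = edge_weight c j i" for i j
    using assms edge_sym unfolding admissible_def edge_weight_def by auto
  have "u \<bullet> laplacian c d
      = (\<Sum>i\<in>UNIV. \<Sum>j\<in>UNIV. edge_weight c i j * u $ i * (d $ j - d $ i))
        - (\<Sum>i\<in>UNIV. zealot_weight c i * u $ i * d $ i)"
    unfolding inner_vec_def laplacian_component
    by (simp add: sum_distrib_left sum_subtractf[symmetric] algebra_simps)
  then show ?thesis
    using sum_sum_symmetric_weights[of UNIV "edge_weight c" "\<lambda>i. u $ i" "\<lambda>i. d $ i"] sym by simp
qed

lemma laplacian_self_adjoint:
  "admissible \<kappa> c \<Longrightarrow> u \<bullet> laplacian c d = d \<bullet> laplacian c u"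
  unfolding inner_laplacian by (simp add: algebra_simps)

lemma inner_laplacian_le:
  assumes "admissible \<kappa> c" and "0 \<le> \<kappa>"
  shows "d \<bullet> laplacian c d \<le> - \<kappa> * dirichlet_energy d"
proof -
  have "\<kappa> * (\<Sum>i\<in>UNIV. \<Sum>j\<in>UNIV. if E (Inl i) (Inl j) then (d $ i - d $ j)\<^sup>2 else 0)
      \<le> (\<Sum>i\<in>UNIV. \<Sum>j\<in>UNIV. edge_weight c i j * (d $ i - d $ j) * (d $ i - d $ j))"
    unfolding sum_distrib_left using assms unfolding admissible_def edge_weight_def
    by (intro sum_mono) (auto simp: power2_eq_square mult.assoc intro!: mult_right_mono)
  moreover have "\<kappa> * (\<Sum>i\<in>UNIV. \<Sum>k\<in>UNIV. if E (Inl i) (Inr k) then (d $ i)\<^sup>2 else 0)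
      \<le> (\<Sum>i\<in>UNIV. zealot_weight c i * d $ i * d $ i)"
    unfolding sum_distrib_left zealot_weight_def sum_distrib_right using assms unfolding admissible_def
    by (intro sum_mono) (auto simp: power2_eq_square mult.assoc intro!: mult_right_mono)
  ultimately show ?thesis
    unfolding inner_laplacian[OF assms(1)] dirichlet_energy_def by (simp add: algebra_simps)
qed

lemma dirichlet_energy_nonneg: "0 \<le> dirichlet_energy d"
  unfolding dirichlet_energy_def by (intro add_nonneg_nonneg divide_nonneg_pos sum_nonneg) auto

lemma dirichlet_energy_eq_0_iff: "dirichlet_energy d = 0 \<longleftrightarrow> d = 0"
proof
  assume "dirichlet_energy d = 0"
  moreover have "0 \<le> (\<Sum>i\<in>UNIV. \<Sum>j\<in>UNIV. if E (Inl i) (Inl j) then (d $ i - d $ j)\<^sup>2 else 0)"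
    and "0 \<le> (\<Sum>i\<in>UNIV. \<Sum>k\<in>UNIV. if E (Inl i) (Inr k) then (d $ i)\<^sup>2 else 0)"
    by (intro sum_nonneg; simp)+
  ultimately have "(\<Sum>i\<in>UNIV. \<Sum>j\<in>UNIV. if E (Inl i) (Inl j) then (d $ i - d $ j)\<^sup>2 else 0) = 0"
    and "(\<Sum>i\<in>UNIV. \<Sum>k\<in>UNIV. if E (Inl i) (Inr k) then (d $ i)\<^sup>2 else 0) = 0"
    unfolding dirichlet_energy_def by linarith+
  then have edge_terms: "\<forall>i j. (if E (Inl i) (Inl j) then (d $ i - d $ j)\<^sup>2 else 0) = 0"
    and zealot_terms: "\<forall>i k. (if E (Inl i) (Inr k) then (d $ i)\<^sup>2 else 0) = 0"
    by (simp_all add: sum_nonneg sum_nonneg_eq_0_iff)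
  have edge: "E (Inl i) (Inl j) \<Longrightarrow> d $ i = d $ j" for i j
    using edge_terms by (metis power_eq_0_iff right_minus_eq)
  have zealot: "E (Inl i) (Inr k) \<Longrightarrow> d $ i = 0" for i k
    using zealot_terms by (metis power_eq_0_iff)
  obtain i k where "E (Inl i) (Inr k)"
    using zealot_edge by blast
  then have "d $ j = 0" for j
    using connected_induct[of "\<lambda>i. d $ i = 0"] zealot edge by metis
  then show "d = 0"
    by (simp add: vec_eq_iff)
qed (simp add: dirichlet_energy_def cong: if_cong)

lemma dirichlet_energy_scaleR: "dirichlet_energy (r *\<^sub>R d) = r\<^sup>2 * dirichlet_energy d"
proof -
  have "(r * a - r * b)\<^sup>2 = r\<^sup>2 * (a - b)\<^sup>2" "(r * a)\<^sup>2 = r\<^sup>2 * a\<^sup>2" for a b :: real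
    by (simp_all add: power2_eq_square algebra_simps)
  moreover have "r\<^sup>2 * (if P then a else 0) = (if P then r\<^sup>2 * a else 0)" for P and a :: real
    by simp
  ultimately show ?thesis
    unfolding dirichlet_energy_def
    by (simp only: vector_scaleR_component ring_distribs sum_distrib_left times_divide_eq_right
        real_scaleR_def)
qed

lemma continuous_on_dirichlet_energy: "continuous_on S dirichlet_energy"
  unfolding dirichlet_energy_def
  by (intro continuous_intros) simp

lemma poincare_inequality_exists: "\<exists>l>0. \<forall>d. l * (norm d)\<^sup>2 \<le> dirichlet_energy d"
proof -
  have "sphere (0::real^'n) 1 \<noteq> {}"
    using norm_axis_1 by (metis mem_sphere_0 empty_iff)
  then obtain d0 where d0: "d0 \<in> sphere 0 1" and min: "\<forall>d\<in>sphere 0 1. dirichlet_energy d0 \<le> dirichlet_energy d"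
    using continuous_attains_inf[OF compact_sphere _ continuous_on_dirichlet_energy] by blast
  have "d0 \<noteq> 0"
    using d0 by auto
  then have pos: "0 < dirichlet_energy d0"
    using dirichlet_energy_eq_0_iff dirichlet_energy_nonneg[of d0] by force
  have "dirichlet_energy d0 * (norm d)\<^sup>2 \<le> dirichlet_energy d" for d
  proof (cases "d = 0")
    case False
    then have "dirichlet_energy d0 \<le> dirichlet_energy ((1 / norm d) *\<^sub>R d)"
      using min by simp
    also have "\<dots> = dirichlet_energy d / (norm d)\<^sup>2"
      by (simp add: dirichlet_energy_scaleR power_one_over)
    finally show ?thesis
      using False by (simp add: field_simps)
  qed (simp add: dirichlet_energy_nonneg)
  then show ?thesis
    using pos by blast
qed

definition poincare_const :: real where
  "poincare_const = (SOME l. 0 < l \<and> (\<forall>d. l * (norm d)\<^sup>2 \<le> dirichlet_energy d))"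

lemma poincare_const_pos: "0 < poincare_const"
  and poincare_inequality: "poincare_const * (norm d)\<^sup>2 \<le> dirichlet_energy d"
  using someI_ex[OF poincare_inequality_exists] unfolding poincare_const_def by blast+

lemma laplacian_coercive:
  assumes "admissible \<kappa> c" and "0 < \<kappa>"
  shows "\<kappa> * poincare_const * norm d \<le> norm (laplacian c d)"
proof -
  have "\<kappa> * poincare_const * norm d * norm d \<le> \<kappa> * dirichlet_energy d"
    using poincare_inequality[of d] assms(2) by (simp add: power2_eq_square mult.assoc)
  also have "\<dots> \<le> - (d \<bullet> laplacian c d)"
    using inner_laplacian_le[OF assms(1) less_imp_le[OF assms(2)], of d] by linarith
  also have "\<dots> \<le> norm (laplacian c d) * norm d"
    using norm_cauchy_schwarz[of "- d" "laplacian c d"] by (simp add: mult.commute)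
  finally show ?thesis
    by (cases "d = 0") simp_all
qed

lemma linear_laplacian: "linear (laplacian c)"
  by (rule linearI)
    (simp_all add: vec_eq_iff laplacian_component sum.distrib[symmetric] sum_distrib_left algebra_simps)

lemma laplacian_eq_0_iff:
  assumes "admissible \<kappa> c" and "0 < \<kappa>"
  shows "laplacian c d = 0 \<longleftrightarrow> d = 0"
  using laplacian_coercive[OF assms, of d] assms(2) poincare_const_pos
  by (auto simp: linear_0[OF linear_laplacian] zero_less_mult_iff mult_le_0_iff)

lemma laplacian_surj:
  assumes "admissible \<kappa> c" and "0 < \<kappa>"
  shows "\<exists>d. laplacian c d = b"
proof -
  have "inj (laplacian c)"
    using laplacian_eq_0_iff[OF assms] linear_laplacian by (simp add: linear_inj_iff_eq_0)
  then show ?thesis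
    using linear_inj_imp_surj[OF linear_laplacian] by (metis surjD)
qed

lemma tendsto_0_if_laplacian_tendsto_0:
  assumes "0 < \<kappa>" and "\<forall>\<^sub>F t in F. admissible \<kappa> (c t)"
    and "((\<lambda>t. laplacian (c t) (u t)) \<longlongrightarrow> 0) F"
  shows "(u \<longlongrightarrow> 0) F"
proof (rule Lim_null_comparison)
  show "\<forall>\<^sub>F t in F. norm (u t) \<le> norm (laplacian (c t) (u t)) / (\<kappa> * poincare_const)"
    using assms(2) laplacian_coercive[OF _ assms(1)] assms(1) poincare_const_pos
    by (auto elim!: eventually_mono simp: pos_le_divide_eq mult.commute)
  show "((\<lambda>t. norm (laplacian (c t) (u t)) / (\<kappa> * poincare_const)) \<longlongrightarrow> 0) F"
    using tendsto_divide_zero[OF tendsto_norm_zero[OF assms(3)]] .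
qed

lemma tendsto_laplacian:
  assumes "\<And>i v. E (Inl i) v \<Longrightarrow> ((\<lambda>t. c t i v) \<longlongrightarrow> c' i v) F"
  shows "((\<lambda>t. laplacian (c t) d) \<longlongrightarrow> laplacian c' d) F"
  unfolding laplacian_def
  by (intro tendsto_vec_lambda tendsto_sum tendsto_if_const tendsto_mult assms tendsto_const)

section \<open>Existence and uniqueness of steady states\<close>

definition net_flux :: "real \<Rightarrow> real^'n \<Rightarrow> 'n \<Rightarrow> real" where
  "net_flux \<gamma> x i = (\<Sum>v\<in>UNIV. if E (Inl i) v then flux \<gamma> \<delta> (opinion x z v - x $ i) else 0)"

definition neighbour_average :: "real \<Rightarrow> real^'n \<Rightarrow> real^'n" where
  "neighbour_average \<gamma> x =
     (\<chi> i. (\<Sum>v\<in>UNIV. wgt E \<gamma> \<delta> x z (Inl i) v * opinion x z v) / (\<Sum>v\<in>UNIV. wgt E \<gamma> \<delta> x z (Inl i) v))"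

lemma wgt_nonneg: "0 \<le> wgt E \<gamma> \<delta> x z u v"
  unfolding wgt_def using influence_pos[THEN less_imp_le] by simp

lemma sum_wgt_pos: "0 < (\<Sum>v\<in>UNIV. wgt E \<gamma> \<delta> x z (Inl i) v)"
proof -
  obtain v where "E (Inl i) v"
    using persuadable_has_neighbour by blast
  then have "0 < wgt E \<gamma> \<delta> x z (Inl i) v"
    unfolding wgt_def by (simp add: influence_pos)
  also have "\<dots> \<le> (\<Sum>v\<in>UNIV. wgt E \<gamma> \<delta> x z (Inl i) v)"
    by (rule member_le_sum) (simp_all add: wgt_nonneg)
  finally show ?thesis .
qed

lemma sbcm_f_eq_net_flux:
  "sbcm_f E \<gamma> \<delta> z x i = net_flux \<gamma> x i / (\<Sum>v\<in>UNIV. wgt E \<gamma> \<delta> x z (Inl i) v)"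
  unfolding sbcm_f_def net_flux_def wgt_def
  by (simp add: if_distrib[of "\<lambda>w. w * _"] influence_mult_diff opinion_def cong: if_cong)

lemma steady_state_iff_net_flux: "steady_state E \<gamma> \<delta> z x \<longleftrightarrow> (\<forall>i. net_flux \<gamma> x i = 0)"
  unfolding steady_state_def sbcm_f_eq_net_flux using sum_wgt_pos by (metis divide_eq_0_iff less_irrefl)

lemma sbcm_f_eq_neighbour_average: "sbcm_f E \<gamma> \<delta> z x i = neighbour_average \<gamma> x $ i - x $ i"
  using sum_wgt_pos[of \<gamma> x i]
  by (simp add: sbcm_f_def neighbour_average_def right_diff_distrib sum_subtractf
      flip: sum_distrib_right) (simp add: opinion_def field_simps)

lemma steady_state_iff_fixed_point: "steady_state E \<gamma> \<delta> z x \<longleftrightarrow> neighbour_average \<gamma> x = x"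
  unfolding steady_state_def sbcm_f_eq_neighbour_average by (simp add: vec_eq_iff)

definition zmin :: real where "zmin = Min (range z)"

definition zmax :: real where "zmax = Max (range z)"

definition zealot_box :: "(real^'n) set" where
  "zealot_box = cbox (vec zmin) (vec zmax)"

lemma zealot_opinion_bounds: "zmin \<le> z k" "z k \<le> zmax"
  unfolding zmin_def zmax_def by auto

lemma opinion_bounds:
  assumes "x \<in> zealot_box"
  shows "zmin \<le> opinion x z v \<and> opinion x z v \<le> zmax"
  using assms zealot_opinion_bounds
  unfolding zealot_box_def mem_box_cart opinion_def by (auto split: sum.split)

lemma opinion_diff_bound:
  assumes "x \<in> zealot_box"
  shows "\<bar>opinion x z v - x $ i\<bar> \<le> zmax - zmin"
  using opinion_bounds[OF assms, of v] opinion_bounds[OF assms, of "Inl i"]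
  by (auto simp: opinion_def)

lemma neighbour_average_in_zealot_box:
  assumes "x \<in> zealot_box"
  shows "neighbour_average \<gamma> x \<in> zealot_box"
  unfolding zealot_box_def mem_box_cart
proof (intro allI conjI)
  fix i
  let ?w = "wgt E \<gamma> \<delta> x z (Inl i)"
  have "zmin * (\<Sum>v\<in>UNIV. ?w v) \<le> (\<Sum>v\<in>UNIV. ?w v * opinion x z v)"
    and "(\<Sum>v\<in>UNIV. ?w v * opinion x z v) \<le> zmax * (\<Sum>v\<in>UNIV. ?w v)"
    unfolding sum_distrib_left using opinion_bounds[OF assms] wgt_nonneg
    by (auto intro!: sum_mono simp: mult.commute[of _ "?w _"] intro: mult_left_mono)
  then show "vec zmin $ i \<le> neighbour_average \<gamma> x $ i" "neighbour_average \<gamma> x $ i \<le> vec zmax $ i"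
    using sum_wgt_pos[of \<gamma> x i]
    by (simp_all add: neighbour_average_def pos_le_divide_eq pos_divide_le_eq)
qed

lemma continuous_on_neighbour_average: "continuous_on S (neighbour_average \<gamma>)"
proof -
  have "continuous_on S (\<lambda>x. opinion x z v)" for v
    by (cases v) (simp_all add: opinion_def continuous_on_component)
  moreover from this have "continuous_on S (\<lambda>x. wgt E \<gamma> \<delta> x z (Inl i) v)" for i v
    unfolding wgt_def influence_def by (intro continuous_intros) simp_all
  ultimately show ?thesis
    unfolding neighbour_average_def using sum_wgt_pos
    by (intro continuous_intros) (auto simp: less_imp_neq[symmetric])
qed

lemma steady_state_exists: "\<exists>x. steady_state E \<gamma> \<delta> z x"
proof -
  have "zmin \<le> zmax"
    by (rule order.trans[OF zealot_opinion_bounds])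
  then have "vec zmin \<in> zealot_box"
    unfolding zealot_box_def mem_box_cart by simp
  then have "zealot_box \<noteq> {}"
    by blast
  moreover have "neighbour_average \<gamma> \<in> zealot_box \<rightarrow> zealot_box"
    using neighbour_average_in_zealot_box by blast
  ultimately obtain x where "neighbour_average \<gamma> x = x"
    using brouwer[OF compact_cbox convex_box(1), of "vec zmin" "vec zmax" "neighbour_average \<gamma>"]
      continuous_on_neighbour_average
    unfolding zealot_box_def by metis
  then show ?thesis
    using steady_state_iff_fixed_point by blast
qed

lemma steady_state_neighbour_eq_max:
  assumes "steady_state E \<gamma> \<delta> z x" and "\<And>v. opinion x z v \<le> M"
    and "x $ j = M" and "E (Inl j) v"
  shows "opinion x z v = M"
proof -
  let ?t = "\<lambda>v. if E (Inl j) v then flux \<gamma> \<delta> (opinion x z v - x $ j) else 0"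
  have "\<forall>v\<in>UNIV. 0 \<le> - ?t v"
    using assms(2,3) by (simp add: flux_nonpos_iff)
  moreover have "(\<Sum>v\<in>UNIV. - ?t v) = 0"
    using assms(1) unfolding steady_state_iff_net_flux net_flux_def sum_negf by simp
  ultimately have "?t v = 0"
    using sum_nonneg_eq_0_iff[of UNIV "\<lambda>v. - ?t v"] by simp
  then show ?thesis
    using assms(3,4) by (simp add: flux_eq_0_iff)
qed

text \<open>Maximum principle: by connectivity every persuadable node, and then a zealot, shares
  the maximal persuadable opinion.\<close>
lemma steady_state_le_zealot_bound:
  assumes "\<And>k. z k \<le> U" and "steady_state E \<gamma> \<delta> z x"
  shows "x $ i \<le> U"
proof (rule ccontr)
  assume "\<not> x $ i \<le> U"
  define M where "M = Max (range (\<lambda>i. x $ i))"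
  have le_M: "x $ j \<le> M" for j
    unfolding M_def by simp
  have "M \<in> range (\<lambda>i. x $ i)"
    unfolding M_def by (intro Max_in) auto
  then obtain i0 where "x $ i0 = M"
    by auto
  have "U < M"
    using le_M[of i] \<open>\<not> x $ i \<le> U\<close> by linarith
  then have "z k \<le> M" for k
    using assms(1)[of k] by linarith
  then have "opinion x z v \<le> M" for v
    using le_M by (cases v) (simp_all add: opinion_def)
  note neighbour_eq_M = steady_state_neighbour_eq_max[OF assms(2) this]
  have "x $ j = M" for j
  proof (rule connected_induct[of "\<lambda>j. x $ j = M" i0])
    fix i j
    assume "x $ i = M" and "E (Inl i) (Inl j)"
    from neighbour_eq_M[OF this] show "x $ j = M"
      by (simp add: opinion_def)
  qed fact
  moreover obtain j k where "E (Inl j) (Inr k)"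
    using zealot_edge by blast
  ultimately have "z k = M"
    using neighbour_eq_M[of j "Inr k"] by (simp add: opinion_def)
  then show False
    using assms(1)[of k] \<open>U < M\<close> by simp
qed

lemma steady_state_uminus:
  assumes "steady_state E \<gamma> \<delta> z x"
  shows "steady_state E \<gamma> \<delta> (\<lambda>k. - z k) (- x)"
proof -
  have opinion: "opinion (- x) (\<lambda>k. - z k) v = - opinion x z v" for v
    by (simp add: opinion_def split: sum.split)
  have "wgt E \<gamma> \<delta> (- x) (\<lambda>k. - z k) = wgt E \<gamma> \<delta> x z"
    by (intro ext) (simp add: wgt_def influence_def opinion power2_commute)
  then have "sbcm_f E \<gamma> \<delta> (\<lambda>k. - z k) (- x) i = - sbcm_f E \<gamma> \<delta> z x i" for i
    unfolding sbcm_f_def opinion by (simp add: sum_negf[symmetric] minus_divide_left algebra_simps)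
  then show ?thesis
    using assms unfolding steady_state_def by simp
qed

lemma steady_state_in_zealot_box:
  assumes "steady_state E \<gamma> \<delta> z x"
  shows "x \<in> zealot_box"
proof -
  interpret reflected: sbcm_graph E "\<lambda>k. - z k" \<delta>
    using sbcm_graph_axioms unfolding sbcm_graph_def .
  have "(- x) $ i \<le> - zmin" for i
    by (rule reflected.steady_state_le_zealot_bound[OF _ steady_state_uminus[OF assms]])
      (simp add: zealot_opinion_bounds(1))
  moreover have "x $ i \<le> zmax" for i
    using steady_state_le_zealot_bound[OF _ assms] zealot_opinion_bounds(2) by blast
  ultimately show ?thesis
    unfolding zealot_box_def mem_box_cart by simp
qed

definition gamma_max :: real where
  "gamma_max = 1 / (2 * (zmax - zmin)\<^sup>2 + 2)"

lemma gamma_max_pos: "0 < gamma_max"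
  unfolding gamma_max_def by (simp add: add_nonneg_pos)

lemma gamma_spread_le:
  assumes "0 \<le> \<gamma>" and "\<gamma> < gamma_max"
  shows "\<gamma> * (zmax - zmin)\<^sup>2 \<le> 1/2"
proof -
  have "\<gamma> * (zmax - zmin)\<^sup>2 \<le> gamma_max * (zmax - zmin)\<^sup>2"
    using assms by (simp add: mult_right_mono)
  also have "\<dots> \<le> 1/2"
    unfolding gamma_max_def by (simp add: add_nonneg_pos)
  finally show ?thesis .
qed

text \<open>For \<open>y = x\<close> these are the weights of the linearisation at \<open>x\<close>.\<close>
definition secant_weights :: "real \<Rightarrow> real^'n \<Rightarrow> real^'n \<Rightarrow> 'n \<Rightarrow> 'n + 'm \<Rightarrow> real" where
  "secant_weights \<gamma> x y i v = flux_secant \<gamma> \<delta> (opinion x z v - x $ i) (opinion y z v - y $ i)"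

lemma secant_weights_same: "secant_weights \<gamma> x x i v = flux_ds \<gamma> \<delta> (opinion x z v - x $ i)"
  by (simp add: secant_weights_def flux_secant_def)

lemma admissible_secant_weights:
  assumes "0 \<le> \<gamma>" "\<gamma> < gamma_max" and "x \<in> zealot_box" "y \<in> zealot_box"
  shows "admissible min_slope (secant_weights \<gamma> x y)"
  unfolding admissible_def
proof (intro conjI allI impI)
  fix i j
  show "secant_weights \<gamma> x y i (Inl j) = secant_weights \<gamma> x y j (Inl i)"
    using flux_secant_minus[of \<gamma> \<delta> "x $ j - x $ i" "y $ j - y $ i"]
    by (simp add: secant_weights_def opinion_def)
next
  fix i v
  show "min_slope \<le> secant_weights \<gamma> x y i v"
    unfolding secant_weights_def
    using min_slope_le_flux_secant[OF assms(1) \<delta>_nonneg gamma_spread_le[OF assms(1,2)]]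
      opinion_diff_bound[OF assms(3)] opinion_diff_bound[OF assms(4)] by blast
qed

lemma net_flux_diff_eq_laplacian:
  "net_flux \<gamma> x i - net_flux \<gamma> y i = laplacian (secant_weights \<gamma> x y) (x - y) $ i"
proof -
  have "opinion x z v - x $ i - (opinion y z v - y $ i) = extend_by_zero (x - y) v - (x - y) $ i" for v
    by (simp add: opinion_def extend_by_zero_def split: sum.split)
  then show ?thesis
    unfolding net_flux_def laplacian_def vec_lambda_beta secant_weights_def sum_subtractf[symmetric]
    by (intro sum.cong refl) (simp add: flux_diff_eq_secant)
qed

lemma steady_state_unique:
  assumes "\<gamma> \<in> {0..<gamma_max}" and "steady_state E \<gamma> \<delta> z x" "steady_state E \<gamma> \<delta> z y"
  shows "x = y"
proof -
  have "laplacian (secant_weights \<gamma> x y) (x - y) = 0"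
    using assms(2,3) net_flux_diff_eq_laplacian[of \<gamma> x _ y]
    unfolding steady_state_iff_net_flux by (simp add: vec_eq_iff)
  moreover have "admissible min_slope (secant_weights \<gamma> x y)"
    using assms by (intro admissible_secant_weights steady_state_in_zealot_box) auto
  ultimately show ?thesis
    using laplacian_eq_0_iff min_slope_pos by simp
qed

section \<open>Smooth dependence on \<open>\<gamma>\<close>\<close>

definition steady :: "real \<Rightarrow> real^'n" where
  "steady \<gamma> = (SOME x. steady_state E \<gamma> \<delta> z x)"

definition net_flux_dgamma :: "real \<Rightarrow> real^'n \<Rightarrow> 'n \<Rightarrow> real" where
  "net_flux_dgamma \<gamma> x i =
     (\<Sum>v\<in>UNIV. if E (Inl i) v then flux_dgamma \<gamma> \<delta> (opinion x z v - x $ i) else 0)"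

text \<open>Differentiating \<open>net_flux \<gamma> (steady \<gamma>) = 0\<close> in \<open>\<gamma>\<close> shows that the
  derivative of \<open>steady\<close> must solve this equation.\<close>
definition steady_deriv :: "real \<Rightarrow> real^'n" where
  "steady_deriv \<gamma> = (SOME D. laplacian (secant_weights \<gamma> (steady \<gamma>) (steady \<gamma>)) D
                             = - (\<chi> i. net_flux_dgamma \<gamma> (steady \<gamma>) i))"

lemma steady_state_steady: "steady_state E \<gamma> \<delta> z (steady \<gamma>)"
  unfolding steady_def by (rule someI_ex) (rule steady_state_exists)

lemma steady_in_zealot_box: "steady \<gamma> \<in> zealot_box"
  using steady_state_in_zealot_box steady_state_steady by blast

lemma steady_unique: "\<gamma> \<in> {0..<gamma_max} \<Longrightarrow> steady_state E \<gamma> \<delta> z x \<Longrightarrow> x = steady \<gamma>"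
  using steady_state_unique steady_state_steady by blast

lemma admissible_steady_weights:
  "t \<in> {0..<gamma_max} \<Longrightarrow> admissible min_slope (secant_weights t (steady t) (steady \<gamma>))"
  using admissible_secant_weights steady_in_zealot_box by simp

lemma steady_deriv_eq:
  "\<gamma> \<in> {0..<gamma_max} \<Longrightarrow>
   laplacian (secant_weights \<gamma> (steady \<gamma>) (steady \<gamma>)) (steady_deriv \<gamma>)
     = - (\<chi> i. net_flux_dgamma \<gamma> (steady \<gamma>) i)"
  unfolding steady_deriv_def
  by (rule someI_ex) (rule laplacian_surj[OF admissible_steady_weights min_slope_pos])

lemma net_flux_has_real_derivative_gamma:
  "((\<lambda>g. net_flux g x i) has_real_derivative net_flux_dgamma \<gamma> x i) (at \<gamma> within S)"
  unfolding net_flux_def net_flux_dgamma_def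
  by (intro DERIV_sum DERIV_if_const flux_has_real_derivative_gamma)

lemma laplacian_steady_diff:
  "laplacian (secant_weights t (steady t) (steady \<gamma>)) (steady t - steady \<gamma>)
     = (\<chi> i. net_flux \<gamma> (steady \<gamma>) i - net_flux t (steady \<gamma>) i)"
  using net_flux_diff_eq_laplacian[of t "steady t" _ "steady \<gamma>"] steady_state_steady
  unfolding steady_state_iff_net_flux by (simp add: vec_eq_iff)

lemma steady_tendsto:
  assumes "\<gamma> \<in> {0..<gamma_max}"
  shows "(steady \<longlongrightarrow> steady \<gamma>) (at \<gamma> within {0..<gamma_max})"
proof -
  have "((\<lambda>t. steady t - steady \<gamma>) \<longlongrightarrow> 0) (at \<gamma> within {0..<gamma_max})"
  proof (rule tendsto_0_if_laplacian_tendsto_0[OF min_slope_pos])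
    show "\<forall>\<^sub>F t in at \<gamma> within {0..<gamma_max}.
        admissible min_slope (secant_weights t (steady t) (steady \<gamma>))"
      using eventually_mem_at_within by (rule eventually_mono) (rule admissible_steady_weights)
    have "((\<lambda>t. net_flux t (steady \<gamma>) i) \<longlongrightarrow> net_flux \<gamma> (steady \<gamma>) i) (at \<gamma> within {0..<gamma_max})"
      for i
      using DERIV_continuous[OF net_flux_has_real_derivative_gamma] by (simp add: continuous_within)
    then have "((\<lambda>t. \<chi> i. net_flux \<gamma> (steady \<gamma>) i - net_flux t (steady \<gamma>) i) \<longlongrightarrow> (\<chi> i. 0))
        (at \<gamma> within {0..<gamma_max})"
      by (intro tendsto_vec_lambda tendsto_eq_intros) auto
    then show "((\<lambda>t. laplacian (secant_weights t (steady t) (steady \<gamma>)) (steady t - steady \<gamma>))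
        \<longlongrightarrow> 0) (at \<gamma> within {0..<gamma_max})"
      by (simp add: laplacian_steady_diff zero_vec_def)
  qed
  then show ?thesis
    by (simp add: LIM_zero_iff)
qed

lemma tendsto_steady_opinion_diff:
  assumes "\<gamma> \<in> {0..<gamma_max}"
  shows "((\<lambda>t. opinion (steady t) z v - steady t $ i) \<longlongrightarrow> opinion (steady \<gamma>) z v - steady \<gamma> $ i)
    (at \<gamma> within {0..<gamma_max})"
  using tendsto_vec_nth[OF steady_tendsto[OF assms]]
  by (cases v) (simp_all add: opinion_def tendsto_diff)

lemma net_flux_quotient_tendsto:
  "((\<lambda>t. \<chi> i. (net_flux t x i - net_flux \<gamma> x i) / (t - \<gamma>)) \<longlongrightarrow> (\<chi> i. net_flux_dgamma \<gamma> x i))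
     (at \<gamma> within S)"
  by (intro tendsto_vec_lambda) (rule net_flux_has_real_derivative_gamma[unfolded has_field_derivative_iff])

lemma steady_has_vector_derivative:
  assumes \<gamma>: "\<gamma> \<in> {0..<gamma_max}"
  shows "(steady has_vector_derivative steady_deriv \<gamma>) (at \<gamma> within {0..<gamma_max})"
proof (rule has_vector_derivative_if_quotient_tendsto)
  let ?x = "steady \<gamma>" and ?D = "steady_deriv \<gamma>" and ?F = "at \<gamma> within {0..<gamma_max}"
  let ?c = "\<lambda>t. secant_weights t (steady t) ?x"
  let ?q = "\<lambda>t. \<chi> i. (net_flux t ?x i - net_flux \<gamma> ?x i) / (t - \<gamma>)"
  show "((\<lambda>t. (1 / (t - \<gamma>)) *\<^sub>R (steady t - ?x) - ?D) \<longlongrightarrow> 0) ?F"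
  proof (rule tendsto_0_if_laplacian_tendsto_0[OF min_slope_pos])
    show "\<forall>\<^sub>F t in ?F. admissible min_slope (?c t)"
      using eventually_mem_at_within by (rule eventually_mono) (rule admissible_steady_weights)
    have "((\<lambda>t. laplacian (?c t) ?D) \<longlongrightarrow> laplacian (secant_weights \<gamma> ?x ?x) ?D) ?F"
      by (intro tendsto_laplacian, unfold secant_weights_same, unfold secant_weights_def)
        (intro tendsto_flux_secant tendsto_ident_at tendsto_steady_opinion_diff \<gamma>)
    from tendsto_diff[OF tendsto_minus[OF net_flux_quotient_tendsto[of ?x]] this]
    have "((\<lambda>t. - ?q t - laplacian (?c t) ?D) \<longlongrightarrow> 0) ?F"
      using steady_deriv_eq[OF \<gamma>] by simp
    moreover have "- ?q t - laplacian (?c t) ?D = laplacian (?c t) ((1 / (t - \<gamma>)) *\<^sub>R (steady t - ?x) - ?D)"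
      for t
      using laplacian_steady_diff[of t \<gamma>]
      by (simp add: linear_diff[OF linear_laplacian] linear_cmul[OF linear_laplacian] vec_eq_iff
          diff_divide_distrib)
    ultimately show "((\<lambda>t. laplacian (?c t) ((1 / (t - \<gamma>)) *\<^sub>R (steady t - ?x) - ?D)) \<longlongrightarrow> 0) ?F"
      by simp
  qed
qed

lemma steady_deriv_tendsto:
  assumes \<gamma>: "\<gamma> \<in> {0..<gamma_max}"
  shows "(steady_deriv \<longlongrightarrow> steady_deriv \<gamma>) (at \<gamma> within {0..<gamma_max})"
proof -
  let ?x = "steady \<gamma>" and ?D = "steady_deriv \<gamma>" and ?F = "at \<gamma> within {0..<gamma_max}"
  let ?c = "\<lambda>t. secant_weights t (steady t) (steady t)"
  let ?g = "\<lambda>t. \<chi> i. net_flux_dgamma t (steady t) i"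
  have "((\<lambda>t. steady_deriv t - ?D) \<longlongrightarrow> 0) ?F"
  proof (rule tendsto_0_if_laplacian_tendsto_0[OF min_slope_pos])
    show "\<forall>\<^sub>F t in ?F. admissible min_slope (?c t)"
      using eventually_mem_at_within by (rule eventually_mono) (rule admissible_steady_weights)
    have "(?g \<longlongrightarrow> (\<chi> i. net_flux_dgamma \<gamma> ?x i)) ?F"
      unfolding net_flux_dgamma_def
      by (intro tendsto_vec_lambda tendsto_sum tendsto_if_const tendsto_flux_dgamma tendsto_ident_at
          tendsto_steady_opinion_diff \<gamma>)
    moreover have "((\<lambda>t. laplacian (?c t) ?D) \<longlongrightarrow> laplacian (secant_weights \<gamma> ?x ?x) ?D) ?F"
      by (intro tendsto_laplacian, unfold secant_weights_same)
        (intro tendsto_flux_ds tendsto_ident_at tendsto_steady_opinion_diff \<gamma>)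
    ultimately have "((\<lambda>t. - ?g t - laplacian (?c t) ?D) \<longlongrightarrow> 0) ?F"
      using tendsto_diff[OF tendsto_minus] steady_deriv_eq[OF \<gamma>] by force
    moreover have "\<forall>\<^sub>F t in ?F. - ?g t - laplacian (?c t) ?D = laplacian (?c t) (steady_deriv t - ?D)"
      using eventually_mem_at_within
      by (rule eventually_mono) (simp add: linear_diff[OF linear_laplacian] steady_deriv_eq)
    ultimately show "((\<lambda>t. laplacian (?c t) (steady_deriv t - ?D)) \<longlongrightarrow> 0) ?F"
      by (rule Lim_transform_eventually)
  qed
  then show ?thesis
    by (simp add: LIM_zero_iff)
qed

lemma C1_steady: "C1_on_Ico gamma_max steady"
  unfolding C1_on_Ico_def continuous_on_def
  using steady_has_vector_derivative steady_deriv_tendsto by blast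

section \<open>Linear stability\<close>

lemma opinion_add_scaleR: "opinion (x + t *\<^sub>R d) z v = opinion x z v + t * extend_by_zero d v"
  by (cases v) (simp_all add: opinion_def extend_by_zero_def)

lemma net_flux_has_directional_derivative:
  "((\<lambda>t. net_flux \<gamma> (x + t *\<^sub>R d) i) has_real_derivative laplacian (secant_weights \<gamma> x x) d $ i)
     (at 0)"
proof -
  have affine: "opinion (x + t *\<^sub>R d) z v - (x + t *\<^sub>R d) $ i
      = (opinion x z v - x $ i) + t * (extend_by_zero d v - d $ i)" for t v
    by (simp add: opinion_add_scaleR algebra_simps)
  show ?thesis
    unfolding net_flux_def affine laplacian_def vec_lambda_beta secant_weights_same
    by (intro DERIV_sum DERIV_if_const flux_has_real_derivative_affine)
qed

lemma isCont_sum_wgt_direction: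
  "isCont (\<lambda>t. \<Sum>v\<in>UNIV. wgt E \<gamma> \<delta> (x + t *\<^sub>R d) z (Inl i) v) t0"
proof -
  have "continuous_on UNIV (\<lambda>t. \<Sum>v\<in>UNIV. wgt E \<gamma> \<delta> (x + t *\<^sub>R d) z (Inl i) v)"
    unfolding wgt_def influence_def opinion_add_scaleR by (intro continuous_intros) simp_all
  then show ?thesis
    by (simp add: continuous_on_eq_continuous_at)
qed

text \<open>At a steady state the numerator of \<open>sbcm_f\<close> vanishes, so only its derivative
  contributes.\<close>
lemma jacobian_P_steady_state:
  assumes "steady_state E \<gamma> \<delta> z x"
  shows "jacobian_P E \<gamma> \<delta> z x
     = (\<chi> i j. matrix (laplacian (secant_weights \<gamma> x x)) $ i $ j / (\<Sum>v\<in>UNIV. wgt E \<gamma> \<delta> x z (Inl i) v))"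
proof -
  let ?e = "\<lambda>j. axis j (1::real)"
  have shift: "(\<chi> k. if k = j then t else x $ k) = x + (t - x $ j) *\<^sub>R ?e j" for t j
    by (simp add: vec_eq_iff axis_def)
  have "((\<lambda>t. net_flux \<gamma> (x + t *\<^sub>R ?e j) i / (\<Sum>v\<in>UNIV. wgt E \<gamma> \<delta> (x + t *\<^sub>R ?e j) z (Inl i) v))
       has_real_derivative
         matrix (laplacian (secant_weights \<gamma> x x)) $ i $ j / (\<Sum>v\<in>UNIV. wgt E \<gamma> \<delta> x z (Inl i) v))
       (at 0)" for i j
    using DERIV_divide_at_root[OF net_flux_has_directional_derivative isCont_sum_wgt_direction]
      assms sum_wgt_pos[of \<gamma> x i]
    unfolding steady_state_iff_net_flux by (simp add: matrix_def)
  then have "((\<lambda>t. sbcm_f E \<gamma> \<delta> z (\<chi> k. if k = j then t else x $ k) i)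
       has_real_derivative
         matrix (laplacian (secant_weights \<gamma> x x)) $ i $ j / (\<Sum>v\<in>UNIV. wgt E \<gamma> \<delta> x z (Inl i) v))
       (at (x $ j))" for i j
    unfolding shift sbcm_f_eq_net_flux using DERIV_shift[where x = 0 and z = "x $ j"] by simp
  then show ?thesis
    unfolding jacobian_P_def by (simp add: DERIV_imp_deriv vec_eq_iff)
qed

lemma steady_state_linearly_stable:
  assumes "\<gamma> \<in> {0..<gamma_max}" and "steady_state E \<gamma> \<delta> z x"
  shows "linearly_stable E \<gamma> \<delta> z x"
  unfolding linearly_stable_def jacobian_P_steady_state[OF assms(2)]
proof (intro allI impI eigenvalue_diag_inverse_mult_neg_definite[OF sum_wgt_pos])
  let ?c = "secant_weights \<gamma> x x"
  have admissible: "admissible min_slope ?c"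
    using assms by (intro admissible_secant_weights steady_state_in_zealot_box) auto
  have matrix_mult: "matrix (laplacian ?c) *v d = laplacian ?c d" for d
    using fun_cong[OF matrix_vector_mul(2)[OF linear_laplacian]] by simp
  have entry_sym: "matrix (laplacian ?c) $ j $ i = matrix (laplacian ?c) $ i $ j" for i j
  proof -
    have "matrix (laplacian ?c) $ j $ i = axis j 1 \<bullet> laplacian ?c (axis i 1)"
      by (simp add: matrix_def inner_axis')
    also have "\<dots> = axis i 1 \<bullet> laplacian ?c (axis j 1)"
      by (rule laplacian_self_adjoint[OF admissible])
    also have "\<dots> = matrix (laplacian ?c) $ i $ j"
      by (simp add: matrix_def inner_axis')
    finally show ?thesis .
  qed
  show "transpose (matrix (laplacian ?c)) = matrix (laplacian ?c)"
    unfolding transpose_def vec_eq_iff vec_lambda_beta by (blast intro: entry_sym)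
  fix d :: "real^'n"
  assume "d \<noteq> 0"
  then have "0 < min_slope * dirichlet_energy d"
    using dirichlet_energy_nonneg[of d] dirichlet_energy_eq_0_iff[of d] min_slope_pos by simp
  then show "d \<bullet> (matrix (laplacian ?c) *v d) < 0"
    using inner_laplacian_le[OF admissible less_imp_le[OF min_slope_pos], of d]
    unfolding matrix_mult by linarith
qed

end

text \<open>Without an edge to a zealot the \<open>\<gamma> = 0\<close> dynamics is invariant under shifting all
  persuadable opinions by a constant, so steady states would not be unique.\<close>
lemma zealot_edge_if_unique_steady_state:
  assumes "steady_state E 0 \<delta> z xbar" and "\<forall>y. steady_state E 0 \<delta> z y \<longrightarrow> y = xbar"
  shows "\<exists>i k. E (Inl i) (Inr k)"
proof (rule ccontr)
  assume no_zealot_edge: "\<nexists>i k. E (Inl i) (Inr k)"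
  define y where "y = xbar + vec 1"
  have weights: "wgt E 0 \<delta> y z = wgt E 0 \<delta> xbar z"
    by (intro ext) (simp add: wgt_def influence_def)
  have pulls: "wgt E 0 \<delta> xbar z (Inl i) v * (opinion y z v - opinion y z (Inl i))
      = wgt E 0 \<delta> xbar z (Inl i) v * (opinion xbar z v - opinion xbar z (Inl i))" for i v
    using no_zealot_edge by (cases v) (auto simp: wgt_def opinion_def y_def)
  have "sbcm_f E 0 \<delta> z y i = sbcm_f E 0 \<delta> z xbar i" for i
    unfolding sbcm_f_def weights pulls ..
  then have "steady_state E 0 \<delta> z y"
    using assms(1) unfolding steady_state_def by simp
  then have "y = xbar"
    using assms(2) by blast
  then show False
    by (simp add: y_def vec_eq_iff)
qed

theorem theorem1:
  fixes E :: "'n::finite + 'm::finite \<Rightarrow> 'n + 'm \<Rightarrow> bool"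
    and z :: "'m \<Rightarrow> real"
    and \<delta> :: real
    and xbar :: "real^'n"
  assumes "simple_graph E"
    and "persuadable_connected E"
    and "\<delta> \<ge> 0"
    and "steady_state E 0 \<delta> z xbar"
    and "\<forall>y. steady_state E 0 \<delta> z y \<longrightarrow> y = xbar"
  shows "\<exists>\<epsilon>>0. \<exists>h. (C1_on_Ico \<epsilon> h \<and> h 0 = xbar
            \<and> (\<forall>\<gamma>\<in>{0..<\<epsilon>}. (\<exists>!x. steady_state E \<gamma> \<delta> z x) \<and> steady_state E \<gamma> \<delta> z (h \<gamma>))
            \<and> (\<forall>\<gamma>\<in>{0..<\<epsilon>}. linearly_stable E \<gamma> \<delta> z (h \<gamma>)))
          \<and> (\<forall>g. (C1_on_Ico \<epsilon> g \<and> g 0 = xbar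
                  \<and> (\<forall>\<gamma>\<in>{0..<\<epsilon>}. (\<exists>!x. steady_state E \<gamma> \<delta> z x) \<and> steady_state E \<gamma> \<delta> z (g \<gamma>))
                  \<and> (\<forall>\<gamma>\<in>{0..<\<epsilon>}. linearly_stable E \<gamma> \<delta> z (g \<gamma>)))
                 \<longrightarrow> (\<forall>t\<in>{0..<\<epsilon>}. g t = h t))"
proof -
  interpret sbcm_graph E z \<delta>
    using assms(1-3) zealot_edge_if_unique_steady_state[OF assms(4,5)] by unfold_locales
  have unique: "\<gamma> \<in> {0..<gamma_max} \<Longrightarrow> steady_state E \<gamma> \<delta> z x \<longleftrightarrow> x = steady \<gamma>" for \<gamma> x
    using steady_unique steady_state_steady by blast
  have "steady 0 = xbar"
    using unique[of 0 xbar] gamma_max_pos assms(4) by simp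
  moreover have "\<forall>\<gamma>\<in>{0..<gamma_max}. (\<exists>!x. steady_state E \<gamma> \<delta> z x) \<and> steady_state E \<gamma> \<delta> z (steady \<gamma>)"
    using unique by simp
  moreover have "\<forall>\<gamma>\<in>{0..<gamma_max}. linearly_stable E \<gamma> \<delta> z (steady \<gamma>)"
    using steady_state_linearly_stable steady_state_steady by blast
  moreover have "\<forall>t\<in>{0..<gamma_max}. g t = steady t"
    if "\<forall>\<gamma>\<in>{0..<gamma_max}. steady_state E \<gamma> \<delta> z (g \<gamma>)" for g
    using that unique by blast
  ultimately show ?thesis
    using gamma_max_pos C1_steady by blast
qed

end
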